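(* Let $(a',b',c',d')\in\mathbb{Z}_{\ge0}^4$, let $t$ be an integer with $1\le t\le q_0-1$, and assume $\lVert(a',b',c',d')\rVert\le t(q+2q_0+1)$. Then there exists a unique $(a,b,c,d)\in\mathbb{Z}_{\ge0}^4$ with $b\in\{0,1\}$ and $\lVert(a,b,c,d)\rVert=\lVert(a',b',c',d')\rVert$.
   Context: $n\ge2$ is an integer, $q_0=2^n$, $q=2q_0^2$, and for $(a,b,c,d)\in\mathbb{Z}_{\ge0}^4$ one sets $\lVert(a,b,c,d)\rVert:=aq+b(q+q_0)+c(q+2q_0)+d(q+2q_0+1)$. *)

theory Defs
  imports Main
begin

definition q0 :: "nat \<Rightarrow> nat" where "q0 n = 2 ^ n"
definition qq :: "nat \<Rightarrow> nat" where "qq n = 2 * (q0 n)\<^sup>2"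

definition wnorm :: "nat \<Rightarrow> nat \<times> nat \<times> nat \<times> nat \<Rightarrow> nat" where
  "wnorm n v = (case v of (a, b, c, d) \<Rightarrow>
     a * qq n + b * (qq n + q0 n) + c * (qq n + 2 * q0 n) + d * (qq n + 2 * q0 n + 1))"

end

theory Submission
  imports Defs
begin

text \<open>Writing s = q0 n, the weight of (a,b,c,d) is (a+b+c+d) 2s^2 + (b+2c+2d) s + d.
  Under the hypothesis every representation has a+b+c+d < s, so this is a mixed-radix
  expansion whose digits determine a+b+c+d, b+2c+2d and d; once b \<in> {0,1}, the parity
  of b+2c+2d fixes b and hence everything. For existence, trade pairs of b's using
  2(q+q0) = q + (q+2q0).\<close>

lemma q0_pos: "q0 n \<ge> 1"
  by (simp add: q0_def)

lemma wnorm_mixed_radix: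
  "wnorm n (a, b, c, d) = (a + b + c + d) * qq n + (b + 2 * c + 2 * d) * q0 n + d"
  by (simp add: wnorm_def algebra_simps)

lemma wnorm_carry: "wnorm n (a + h, r, c + h, d) = wnorm n (a, 2 * h + r, c, d)"
  by (simp add: wnorm_def qq_def algebra_simps)

lemma mult_add_eq_mult_add_iff:
  fixes x x' r r' Q :: nat
  assumes "r < Q" and "r' < Q"
  shows "x * Q + r = x' * Q + r' \<longleftrightarrow> x = x' \<and> r = r'"
proof
  assume eq: "x * Q + r = x' * Q + r'"
  have "x = (x * Q + r) div Q" "r = (x * Q + r) mod Q" using assms(1) by simp_all
  moreover have "x' = (x' * Q + r') div Q" "r' = (x' * Q + r') mod Q" using assms(2) by simp_all
  ultimately show "x = x' \<and> r = r'" using eq by metis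
qed simp

lemma digits_lt_square:
  fixes s y d :: nat
  assumes "y < 2 * s" and "d < s"
  shows "y * s + d < 2 * s\<^sup>2"
proof -
  have "y * s \<le> (2 * s - 1) * s" using assms(1) by (intro mult_right_mono) auto
  moreover have "(2 * s - 1) * s + s = 2 * s\<^sup>2"
    using assms(2) by (cases s) (simp_all add: power2_eq_square algebra_simps)
  ultimately show ?thesis using assms(2) by linarith
qed

lemma wnorm_inj_on_reduced:
  assumes "a + b + c + d < q0 n" and "a' + b' + c' + d' < q0 n"
    and "b \<le> 1" and "b' \<le> 1"
    and "wnorm n (a, b, c, d) = wnorm n (a', b', c', d')"
  shows "(a, b, c, d) = (a', b', c', d')"
proof -
  let ?s = "q0 n"
  have digits: "b + 2 * c + 2 * d < 2 * ?s" "d < ?s"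
    "b' + 2 * c' + 2 * d' < 2 * ?s" "d' < ?s" using assms(1,2) by linarith+
  have "(a + b + c + d) * qq n + ((b + 2 * c + 2 * d) * ?s + d)
      = (a' + b' + c' + d') * qq n + ((b' + 2 * c' + 2 * d') * ?s + d')"
    using assms(5) by (simp add: wnorm_mixed_radix add.assoc)
  then have "a + b + c + d = a' + b' + c' + d'"
    and mid: "(b + 2 * c + 2 * d) * ?s + d = (b' + 2 * c' + 2 * d') * ?s + d'"
    using mult_add_eq_mult_add_iff digits_lt_square digits unfolding qq_def by blast+
  moreover have "b + 2 * c + 2 * d = b' + 2 * c' + 2 * d'" "d = d'"
    using mid digits mult_add_eq_mult_add_iff by blast+
  moreover from this(1) have "b = b'" using assms(3,4) by presburger
  ultimately show ?thesis by simp
qed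

lemma wnorm_small_imp_reduced:
  assumes "wnorm n (a, b, c, d) \<le> (q0 n - 1) * (qq n + 2 * q0 n + 1)"
  shows "a + b + c + d < q0 n"
proof -
  let ?s = "q0 n"
  have "(a + b + c + d) * qq n \<le> wnorm n (a, b, c, d)" by (simp add: wnorm_mixed_radix)
  also have "\<dots> \<le> (?s - 1) * (qq n + 2 * ?s + 1)" by (fact assms)
  also have "\<dots> < ?s * qq n"
  proof -
    obtain r where "?s = Suc r" using q0_pos[of n] by (cases ?s) auto
    then show ?thesis by (simp add: qq_def power2_eq_square algebra_simps)
  qed
  finally show ?thesis by simp
qed

theorem lemma3p2:
  fixes n t :: nat and a' b' c' d' :: nat
  assumes "n \<ge> 2"
    and "1 \<le> t" and "t \<le> q0 n - 1"
    and "wnorm n (a', b', c', d') \<le> t * (qq n + 2 * q0 n + 1)"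
  shows "\<exists>!v :: nat \<times> nat \<times> nat \<times> nat.
           fst (snd v) \<in> {0, 1} \<and> wnorm n v = wnorm n (a', b', c', d')"
proof -
  let ?N = "wnorm n (a', b', c', d')"
  have bound: "?N \<le> (q0 n - 1) * (qq n + 2 * q0 n + 1)"
    using assms(3,4) by (meson le_trans mult_le_cancel2)
  define v where "v = (a' + b' div 2, b' mod 2, c' + b' div 2, d')"
  have v: "fst (snd v) \<in> {0, 1} \<and> wnorm n v = ?N"
    unfolding v_def wnorm_carry by auto
  show ?thesis
  proof (rule ex1I[of _ v])
    fix w :: "nat \<times> nat \<times> nat \<times> nat"
    assume w: "fst (snd w) \<in> {0, 1} \<and> wnorm n w = ?N"
    obtain a b c d where w_eq: "w = (a, b, c, d)" by (cases w)
    obtain a2 b2 c2 d2 where v_eq: "v = (a2, b2, c2, d2)" by (cases v)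
    have "wnorm n (a, b, c, d) = ?N" "wnorm n (a2, b2, c2, d2) = ?N"
      using w v unfolding w_eq v_eq by simp_all
    moreover have "b \<le> 1" "b2 \<le> 1" using w v unfolding w_eq v_eq by auto
    ultimately show "w = v" unfolding w_eq v_eq
      using bound wnorm_small_imp_reduced wnorm_inj_on_reduced by metis
  qed (fact v)
qed

end
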